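(* Let $X$ be a set and let $T_1,T_2:\mathcal P(X)\to\mathcal P(X)$ be order reversing quasi involutions with $T_1(\mathcal P(X))=T_2(\mathcal P(X))=:\mathcal C_0$ and $T_1|_{\mathcal C_0}=T_2|_{\mathcal C_0}$. Then $T_1=T_2$.
   Context: $\mathcal P(X)$ denotes the power set of $X$. A map $T:\mathcal P(X)\to\mathcal P(X)$ is an order reversing quasi involution if for all $K,L\subseteq X$: (i) $K\subseteq TTK$, and (ii) $L\subseteq K$ implies $TK\subseteq TL$. *)

theory Defs
  imports Main
begin

definition order_reversing_quasi_involution :: "('a set \<Rightarrow> 'a set) \<Rightarrow> bool" where
  "order_reversing_quasi_involution T \<longleftrightarrow>
     (\<forall>K. K \<subseteq> T (T K)) \<and> (\<forall>K L. L \<subseteq> K \<longrightarrow> T K \<subseteq> T L)"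

end

theory Submission
  imports Defs
begin

text \<open>
  Since \<open>T \<circ> T \<circ> T = T\<close>, every set in \<open>\<C>\<^sub>0 = T(\<P>(X))\<close> is fixed by \<open>T \<circ> T\<close>,
  so by antitonicity \<open>T (T K)\<close> is the least member of \<open>\<C>\<^sub>0\<close> containing \<open>K\<close>. Hence \<open>T\<^sub>1 \<circ> T\<^sub>1\<close>
  and \<open>T\<^sub>2 \<circ> T\<^sub>2\<close> are the same closure operator, and
  \<open>T\<^sub>1 K = T\<^sub>1 (T\<^sub>1 (T\<^sub>1 K)) = T\<^sub>2 (T\<^sub>1 (T\<^sub>1 K)) = T\<^sub>2 (T\<^sub>2 (T\<^sub>2 K)) = T\<^sub>2 K\<close>.
\<close>

lemma order_reversing_quasi_involution_extensive:
  "order_reversing_quasi_involution T \<Longrightarrow> K \<subseteq> T (T K)"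
  unfolding order_reversing_quasi_involution_def by auto

lemma order_reversing_quasi_involution_antimono:
  "order_reversing_quasi_involution T \<Longrightarrow> L \<subseteq> K \<Longrightarrow> T K \<subseteq> T L"
  unfolding order_reversing_quasi_involution_def by auto

lemma order_reversing_quasi_involution_triple:
  assumes "order_reversing_quasi_involution T"
  shows "T (T (T K)) = T K"
proof (rule subset_antisym)
  show "T (T (T K)) \<subseteq> T K"
    by (rule order_reversing_quasi_involution_antimono[OF assms
          order_reversing_quasi_involution_extensive[OF assms]])
  show "T K \<subseteq> T (T (T K))"
    by (rule order_reversing_quasi_involution_extensive[OF assms])
qed

lemma order_reversing_quasi_involution_closure_least:
  assumes T: "order_reversing_quasi_involution T"
    and "K \<subseteq> C" and "C \<in> range T"
  shows "T (T K) \<subseteq> C"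
proof -
  obtain L where C: "C = T L" using \<open>C \<in> range T\<close> by blast
  have "T C \<subseteq> T K"
    using \<open>K \<subseteq> C\<close> by (rule order_reversing_quasi_involution_antimono[OF T])
  then have "T (T K) \<subseteq> T (T C)"
    by (rule order_reversing_quasi_involution_antimono[OF T])
  also have "\<dots> = C"
    unfolding C by (rule order_reversing_quasi_involution_triple[OF T])
  finally show ?thesis .
qed

lemma order_reversing_quasi_involution_closure_eq:
  assumes T1: "order_reversing_quasi_involution T1"
    and T2: "order_reversing_quasi_involution T2"
    and range_eq: "range T1 = range T2"
  shows "T1 (T1 K) = T2 (T2 K)"
proof (rule subset_antisym)
  have "T2 (T2 K) \<in> range T1"
    unfolding range_eq by (rule rangeI)
  then show "T1 (T1 K) \<subseteq> T2 (T2 K)"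
    by (rule order_reversing_quasi_involution_closure_least[OF T1
          order_reversing_quasi_involution_extensive[OF T2]])
  have "T1 (T1 K) \<in> range T2"
    unfolding range_eq[symmetric] by (rule rangeI)
  then show "T2 (T2 K) \<subseteq> T1 (T1 K)"
    by (rule order_reversing_quasi_involution_closure_least[OF T2
          order_reversing_quasi_involution_extensive[OF T1]])
qed

theorem proposition8p1:
  fixes T1 T2 :: "'a set \<Rightarrow> 'a set"
  assumes "order_reversing_quasi_involution T1"
    and "order_reversing_quasi_involution T2"
    and "range T1 = range T2"
    and "\<And>C. C \<in> range T1 \<Longrightarrow> T1 C = T2 C"
  shows "T1 = T2"
proof
  fix K
  have "T1 K = T1 (T1 (T1 K))"
    by (rule order_reversing_quasi_involution_triple[OF assms(1), symmetric])
  also have "\<dots> = T2 (T1 (T1 K))"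
    by (rule assms(4)) (rule rangeI)
  also have "\<dots> = T2 (T2 (T2 K))"
    using order_reversing_quasi_involution_closure_eq[OF assms(1-3)] by simp
  also have "\<dots> = T2 K"
    by (rule order_reversing_quasi_involution_triple[OF assms(2)])
  finally show "T1 K = T2 K" .
qed

end
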